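(* Let $b$ be a slowly varying function satisfying $\lim_{t\to0^+}b(t)\in(0,\infty)$. Then there is a function $c:(0,\infty)\to(0,\infty)$ satisfying $c\approx b$ on $(0,\infty)$ that has continuous classical derivatives of all orders (i.e. $c\in\mathcal{C}^\infty((0,\infty))$) and that also satisfies $\lim_{t\to0^+}c(t)\in(0,\infty)$. Furthermore, if $b$ is constant on some right neighbourhood of zero, then $c$ can be chosen in such a way that additionally $\lim_{t\to0^+}c^{(n)}(t)=0$ for all integers $n\ge1$.
   Context: A measurable function $b:(0,\infty)\to(0,\infty)$ is called slowly varying if for every $\varepsilon>0$ there exist a non-decreasing function $b_\varepsilon$ and a non-increasing function $b_{-\varepsilon}$ on $(0,\infty)$ such that $t^{\varepsilon}b(t)\approx b_\varepsilon(t)$ and $t^{-\varepsilon}b(t)\approx b_{-\varepsilon}(t)$ on $(0,\infty)$, where $f\approx g$ means $C^{-1}g\le f\le Cg$ for some constant $C\ge1$ independent of the argument. Measurability is with respect to Lebesgue measure. The limit $\lim_{t\to0^+}c(t)$ need not equal $\lim_{t\to0^+}b(t)$. *)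

theory Defs
  imports "HOL-Analysis.Analysis"
begin

definition equiv_on :: "real set \<Rightarrow> (real \<Rightarrow> real) \<Rightarrow> (real \<Rightarrow> real) \<Rightarrow> bool" where
  "equiv_on S f g \<longleftrightarrow> (\<exists>C\<ge>1. \<forall>t\<in>S. g t / C \<le> f t \<and> f t \<le> C * g t)"

definition slowly_varying :: "(real \<Rightarrow> real) \<Rightarrow> bool" where
  "slowly_varying b \<longleftrightarrow>
     b \<in> borel_measurable (restrict_space lebesgue {0<..}) \<and>
     (\<forall>t>0. b t > 0) \<and>
     (\<forall>\<epsilon>>0. \<exists>bp bm :: real \<Rightarrow> real.
        mono_on {0<..} bp \<and> antimono_on {0<..} bm \<and>
        equiv_on {0<..} (\<lambda>t. t powr \<epsilon> * b t) bp \<and>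
        equiv_on {0<..} (\<lambda>t. t powr (-\<epsilon>) * b t) bm)"

definition smooth_on :: "real set \<Rightarrow> (real \<Rightarrow> real) \<Rightarrow> bool" where
  "smooth_on S c \<longleftrightarrow>
     (\<forall>n. \<forall>t\<in>S. ((deriv ^^ n) c) differentiable (at t)) \<and>
     (\<forall>n. continuous_on S ((deriv ^^ n) c))"

end

theory Submission
  imports Defs "HOL-Complex_Analysis.Complex_Analysis" "HOL-Real_Asymp.Real_Asymp"
begin

(*
  The witness is c(t) = 1 - exp(-1/t) + sum_n b(2^n) phi(t / 2^n) with the flat kernel
  phi(s) = exp(-1/s) s / (1 + s)^2, which satisfies phi(s) <= min(s, 1/s) and phi >= exp(-1)/9 on [1,2].
  Potter's bounds with exponent 1/2 make the terms decay geometrically on both sides of the dyadic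
  block [2^k, 2^(k+1)) containing t >= 1, so that c(t) and b(t) are comparable there; on (0,1] both
  are bounded above and below by positive constants.
  The formula extends to a function F holomorphic in the right half-plane, so c = Re F is smooth.
  On the disc of radius t/2 about t one has |F - 1| <= C exp(-2/(9t)), and the Cauchy estimates give
  c^(n)(t) -> 0 for n >= 1, while c(t) -> 1. Hence one c serves both parts of the statement.
*)

lemma equiv_onI:
  assumes "C \<ge> 1" "\<And>t. t \<in> S \<Longrightarrow> g t \<le> C * f t" "\<And>t. t \<in> S \<Longrightarrow> f t \<le> C * g t"
  shows "equiv_on S f g"
  using assms unfolding equiv_on_def by (auto simp: pos_divide_le_eq mult.commute intro!: exI[of _ C])

lemma equiv_on_Un:
  assumes "equiv_on S f g" "equiv_on T f g" "\<And>t. t \<in> S \<union> T \<Longrightarrow> 0 \<le> g t"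
  shows "equiv_on (S \<union> T) f g"
proof -
  obtain C1 where C1: "C1 \<ge> 1" "\<forall>t\<in>S. g t / C1 \<le> f t \<and> f t \<le> C1 * g t"
    using assms(1) unfolding equiv_on_def by blast
  obtain C2 where C2: "C2 \<ge> 1" "\<forall>t\<in>T. g t / C2 \<le> f t \<and> f t \<le> C2 * g t"
    using assms(2) unfolding equiv_on_def by blast
  have "g t / max C1 C2 \<le> f t \<and> f t \<le> max C1 C2 * g t" if t: "t \<in> S \<union> T" for t
  proof -
    obtain C where C: "C \<in> {C1, C2}" "g t / C \<le> f t" "f t \<le> C * g t"
      using t C1(2) C2(2) by blast
    then have "g t / max C1 C2 \<le> g t / C" "C * g t \<le> max C1 C2 * g t"
      using C1(1) C2(1) assms(3)[OF t] by (auto intro!: divide_left_mono mult_right_mono)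
    with C show ?thesis by linarith
  qed
  then show ?thesis unfolding equiv_on_def using C1(1) by (intro exI[of _ "max C1 C2"]) auto
qed

lemma equiv_on_if_bounded:
  assumes "0 < m\<^sub>f" "0 < m\<^sub>g"
    and "\<And>t. t \<in> S \<Longrightarrow> m\<^sub>f \<le> f t \<and> f t \<le> M\<^sub>f"
    and "\<And>t. t \<in> S \<Longrightarrow> m\<^sub>g \<le> g t \<and> g t \<le> M\<^sub>g"
  shows "equiv_on S f g"
proof -
  define C where "C = max 1 (max (M\<^sub>g / m\<^sub>f) (M\<^sub>f / m\<^sub>g))"
  have "C \<ge> 1" "M\<^sub>g / m\<^sub>f \<le> C" "M\<^sub>f / m\<^sub>g \<le> C"
    by (simp_all add: C_def)
  then have "C \<ge> 1" "M\<^sub>g \<le> C * m\<^sub>f" "M\<^sub>f \<le> C * m\<^sub>g"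
    using assms(1,2) by (simp_all add: pos_divide_le_eq)
  then have "g t / C \<le> f t \<and> f t \<le> C * g t" if "t \<in> S" for t
    using assms(3,4)[OF that] by (auto simp: divide_le_eq mult.commute intro: order_trans mult_left_mono)
  then show ?thesis unfolding equiv_on_def using \<open>C \<ge> 1\<close> by blast
qed

lemma equiv_on_mono_on_le:
  assumes "mono_on S p" "equiv_on S f p"
  obtains C where "C \<ge> 1" "\<And>s t. s \<in> S \<Longrightarrow> t \<in> S \<Longrightarrow> s \<le> t \<Longrightarrow> f s \<le> C * f t"
proof -
  obtain C where C: "C \<ge> 1" "\<forall>t\<in>S. p t / C \<le> f t \<and> f t \<le> C * p t"
    using assms(2) unfolding equiv_on_def by blast
  have "f s \<le> C\<^sup>2 * f t" if "s \<in> S" "t \<in> S" "s \<le> t" for s t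
  proof -
    have "f s \<le> C * p s" using C(2) that by blast
    also have "\<dots> \<le> C * p t" using assms(1) C(1) that by (auto simp: mono_on_def)
    also have "\<dots> \<le> C * (C * f t)" using C that by (auto simp: divide_le_eq mult.commute)
    finally show ?thesis by (simp add: power2_eq_square)
  qed
  moreover have "C\<^sup>2 \<ge> 1" using C(1) by simp
  ultimately show ?thesis using that by blast
qed

lemma equiv_on_antimono_on_le:
  assumes "antimono_on S p" "equiv_on S f p"
  obtains C where "C \<ge> 1" "\<And>s t. s \<in> S \<Longrightarrow> t \<in> S \<Longrightarrow> s \<le> t \<Longrightarrow> f t \<le> C * f s"
proof -
  obtain C where C: "C \<ge> 1" "\<forall>t\<in>S. p t / C \<le> f t \<and> f t \<le> C * p t"
    using assms(2) unfolding equiv_on_def by blast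
  have "f t \<le> C\<^sup>2 * f s" if "s \<in> S" "t \<in> S" "s \<le> t" for s t
  proof -
    have "f t \<le> C * p t" using C(2) that by blast
    also have "\<dots> \<le> C * p s" using assms(1) C(1) that by (auto simp: monotone_on_def)
    also have "\<dots> \<le> C * (C * f s)" using C that by (auto simp: divide_le_eq mult.commute)
    finally show ?thesis by (simp add: power2_eq_square)
  qed
  moreover have "C\<^sup>2 \<ge> 1" using C(1) by simp
  ultimately show ?thesis using that by blast
qed

section \<open>Potter bounds\<close>

definition Potter_bounds :: "real \<Rightarrow> real \<Rightarrow> (real \<Rightarrow> real) \<Rightarrow> bool" where
  "Potter_bounds \<epsilon> K b \<longleftrightarrow>
     (\<forall>s t. 0 < s \<longrightarrow> s \<le> t \<longrightarrow> b s \<le> K * (t / s) powr \<epsilon> * b t \<and> b t \<le> K * (t / s) powr \<epsilon> * b s)"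

lemma slowly_varying_Potter_bounds:
  assumes "slowly_varying b" "\<epsilon> > 0"
  obtains K where "Potter_bounds \<epsilon> K b"
proof -
  obtain bp bm where bp: "mono_on {0<..} bp" "equiv_on {0<..} (\<lambda>t. t powr \<epsilon> * b t) bp"
    and bm: "antimono_on {0<..} bm" "equiv_on {0<..} (\<lambda>t. t powr (-\<epsilon>) * b t) bm"
    using assms unfolding slowly_varying_def by blast
  obtain C\<^sub>1 where up:
    "\<And>s t. s \<in> {0<..} \<Longrightarrow> t \<in> {0<..} \<Longrightarrow> s \<le> t \<Longrightarrow> s powr \<epsilon> * b s \<le> C\<^sub>1 * (t powr \<epsilon> * b t)"
    using equiv_on_mono_on_le[OF bp] by blast
  obtain C\<^sub>2 where down:
    "\<And>s t. s \<in> {0<..} \<Longrightarrow> t \<in> {0<..} \<Longrightarrow> s \<le> t \<Longrightarrow> t powr (-\<epsilon>) * b t \<le> C\<^sub>2 * (s powr (-\<epsilon>) * b s)"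
    using equiv_on_antimono_on_le[OF bm] by blast
  have bpos: "b t > 0" if "t > 0" for t using assms(1) that unfolding slowly_varying_def by blast
  define K where "K = max C\<^sub>1 C\<^sub>2"
  have "b s \<le> K * (t / s) powr \<epsilon> * b t \<and> b t \<le> K * (t / s) powr \<epsilon> * b s"
    if "0 < s" "s \<le> t" for s t
  proof
    have "b s \<le> C\<^sub>1 * (t / s) powr \<epsilon> * b t"
      using up[of s t] that by (simp add: powr_divide field_simps)
    also have "\<dots> \<le> K * (t / s) powr \<epsilon> * b t"
      using bpos[of t] that by (intro mult_right_mono) (auto simp: K_def)
    finally show "b s \<le> K * (t / s) powr \<epsilon> * b t" .
    have "b t \<le> C\<^sub>2 * (t / s) powr \<epsilon> * b s"
      using down[of s t] that by (simp add: powr_divide powr_minus field_simps)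
    also have "\<dots> \<le> K * (t / s) powr \<epsilon> * b s"
      using bpos[of s] that by (intro mult_right_mono) (auto simp: K_def)
    finally show "b t \<le> K * (t / s) powr \<epsilon> * b s" .
  qed
  then show ?thesis using that unfolding Potter_bounds_def by blast
qed

lemma Potter_bounds_ge_one:
  assumes "Potter_bounds \<epsilon> K b" "b 1 > 0"
  shows "K \<ge> 1"
proof -
  have "b 1 \<le> K * (1 / 1) powr \<epsilon> * b 1"
    using assms(1) unfolding Potter_bounds_def by (meson order_refl zero_less_one)
  then show ?thesis using assms(2) by (simp add: mult_le_cancel_right1)
qed

lemma Potter_bounds_half_sqrt:
  assumes "Potter_bounds (1/2) K b" "0 < s" "s \<le> t"
  shows "b s \<le> K * sqrt (t / s) * b t" "b t \<le> K * sqrt (t / s) * b s"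
  using assms unfolding Potter_bounds_def by (simp_all add: powr_half_sqrt)

lemma Potter_bounds_le_unit_interval:
  assumes Potter: "Potter_bounds \<epsilon> K b" and "\<epsilon> \<ge> 0" and pos: "\<And>t. t > 0 \<Longrightarrow> b t > 0"
    and "0 < s" "s \<le> t" "t \<le> 1"
  shows "b s \<le> K * (1 / s) powr \<epsilon> * b t" "b t \<le> K * (1 / s) powr \<epsilon> * b s"
proof -
  have "K \<ge> 1" using Potter_bounds_ge_one[OF Potter] pos by simp
  then have KR: "K * (t / s) powr \<epsilon> \<le> K * (1 / s) powr \<epsilon>"
    using assms(2,4-6) by (auto intro!: mult_left_mono powr_mono2 divide_right_mono)
  have P: "b s \<le> K * (t / s) powr \<epsilon> * b t" "b t \<le> K * (t / s) powr \<epsilon> * b s"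
    using Potter assms(4,5) unfolding Potter_bounds_def by auto
  show "b s \<le> K * (1 / s) powr \<epsilon> * b t"
    using order_trans[OF P(1) mult_right_mono[OF KR]] pos[of t] assms(4,5) by simp
  show "b t \<le> K * (1 / s) powr \<epsilon> * b s"
    using order_trans[OF P(2) mult_right_mono[OF KR]] pos[of s] assms(4) by simp
qed

lemma Potter_bounds_bounded_near_zero:
  assumes Potter: "Potter_bounds \<epsilon> K b" and "\<epsilon> \<ge> 0" and pos: "\<And>t. t > 0 \<Longrightarrow> b t > 0"
    and "L > 0" and lim: "(b \<longlongrightarrow> L) (at_right 0)"
  obtains m M where "m > 0" "M > 0" "\<And>t. 0 < t \<Longrightarrow> t \<le> 1 \<Longrightarrow> m \<le> b t \<and> b t \<le> M"
proof -
  have "eventually (\<lambda>t. L/2 < b t \<and> b t < 2*L) (at_right 0)"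
    using order_tendstoD[OF lim, of "L/2"] order_tendstoD[OF lim, of "2*L"] \<open>L > 0\<close>
    by (auto intro: eventually_conj)
  then obtain d where d: "d > 0" and near: "\<And>t. 0 < t \<Longrightarrow> t < d \<Longrightarrow> L/2 < b t \<and> b t < 2*L"
    unfolding eventually_at_right_field by auto
  define s where "s = min d 1 / 2"
  have s: "0 < s" "s < d" "s < 1" using d by (auto simp: s_def)
  define R where "R = K * (1 / s) powr \<epsilon>"
  have "K \<ge> 1" using Potter_bounds_ge_one[OF Potter] pos by simp
  then have R: "R > 0" using s by (simp add: R_def)
  define m where "m = min (L/2) (L / (2*R))"
  define M where "M = max (2*L) (R*(2*L))"
  have "m \<le> b t \<and> b t \<le> M" if t: "0 < t" "t \<le> 1" for t
  proof (cases "t < s")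
    case True
    then show ?thesis using near[OF t(1)] s unfolding m_def M_def by auto
  next
    case False
    then have Pst: "b s \<le> R * b t" "b t \<le> R * b s"
      using Potter_bounds_le_unit_interval[OF Potter \<open>\<epsilon> \<ge> 0\<close> pos s(1) _ t(2)] unfolding R_def by auto
    have bs: "L/2 < b s" "b s < 2*L" using near[of s] s by auto
    have "L / (2*R) \<le> b t" using Pst(1) bs(1) R by (subst pos_divide_le_eq) (auto simp: algebra_simps)
    then have "m \<le> b t" by (simp add: m_def min_le_iff_disj)
    moreover have "b t \<le> R * (2*L)" using Pst(2) mult_left_mono[of "b s" "2*L" R] bs(2) R by linarith
    ultimately show ?thesis by (simp add: M_def)
  qed
  moreover have "m > 0" "M > 0" using R \<open>L > 0\<close> by (auto simp: m_def M_def)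
  ultimately show ?thesis using that by blast
qed

section \<open>Real parts of holomorphic functions\<close>

lemma has_field_derivative_Re_holomorphic:
  assumes "G holomorphic_on H" "open H" "of_real t \<in> H"
  shows "((\<lambda>t. Re (G (of_real t))) has_field_derivative Re (deriv G (of_real t))) (at t)"
proof -
  have "(G has_field_derivative deriv G (of_real t)) (at (of_real t))"
    using assms by (rule holomorphic_derivI)
  then have "((Re \<circ> G \<circ> of_real) has_field_derivative Re (deriv G (of_real t))) (at t)"
    by (auto intro!: derivative_eq_intros has_vector_derivative_real_field simp: o_def)
  then show ?thesis by (simp add: o_def)
qed

lemma higher_deriv_Re_holomorphic:
  assumes "F holomorphic_on H" "open H" "open S" "of_real ` S \<subseteq> H" "t \<in> S"
  shows "(deriv ^^ n) (\<lambda>t. Re (F (of_real t))) t = Re ((deriv ^^ n) F (of_real t))"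
  using assms(5)
proof (induction n arbitrary: t)
  case (Suc n)
  have "eventually (\<lambda>y. y \<in> S) (nhds t)" using assms(3) Suc.prems by (rule eventually_nhds_in_open)
  then have "eventually (\<lambda>y. (deriv ^^ n) (\<lambda>t. Re (F (of_real t))) y = Re ((deriv ^^ n) F (of_real y))) (nhds t)"
    by (auto elim: eventually_mono simp: Suc.IH)
  then have "(deriv ^^ Suc n) (\<lambda>t. Re (F (of_real t))) t = deriv (\<lambda>y. Re ((deriv ^^ n) F (of_real y))) t"
    by (simp add: deriv_cong_ev)
  also have "\<dots> = Re (deriv ((deriv ^^ n) F) (of_real t))"
    using assms Suc.prems
    by (intro DERIV_imp_deriv has_field_derivative_Re_holomorphic holomorphic_higher_deriv) auto
  finally show ?case by simp
qed simp

lemma smooth_on_Re_holomorphic: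
  assumes "F holomorphic_on H" "open H" "open S" "of_real ` S \<subseteq> H"
  shows "smooth_on S (\<lambda>t. Re (F (of_real t)))"
proof -
  have D: "((deriv ^^ n) (\<lambda>t. Re (F (of_real t))) has_field_derivative
            Re (deriv ((deriv ^^ n) F) (of_real t))) (at t)" if t: "t \<in> S" for n t
  proof -
    have "eventually (\<lambda>y. y \<in> S) (nhds t)" using assms(3) t by (rule eventually_nhds_in_open)
    then have "eventually (\<lambda>y. (deriv ^^ n) (\<lambda>t. Re (F (of_real t))) y = Re ((deriv ^^ n) F (of_real y))) (nhds t)"
      by (auto elim: eventually_mono simp: higher_deriv_Re_holomorphic[OF assms])
    moreover have "((\<lambda>y. Re ((deriv ^^ n) F (of_real y))) has_field_derivative
                     Re (deriv ((deriv ^^ n) F) (of_real t))) (at t)"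
      using assms t by (intro has_field_derivative_Re_holomorphic holomorphic_higher_deriv) auto
    ultimately show ?thesis by (subst DERIV_cong_ev[OF refl _ refl])
  qed
  show ?thesis
    unfolding smooth_on_def real_differentiable_def
    using D by (blast intro: continuous_at_imp_continuous_on DERIV_isCont)
qed

section \<open>The kernel\<close>

definition bump :: "complex \<Rightarrow> complex" where
  "bump w = exp (- 1 / w) * w / (1 + w)^2"

definition bump_real :: "real \<Rightarrow> real" where
  "bump_real s = exp (- 1 / s) * s / (1 + s)^2"

lemma bump_of_real: "bump (of_real s) = of_real (bump_real s)"
  unfolding bump_def bump_real_def by (simp add: exp_of_real[symmetric])

lemma Re_one_over_pos: "Re z > 0 \<Longrightarrow> Re (1 / z) > 0"
  by (auto simp: Re_divide intro!: divide_pos_pos add_pos_nonneg)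

lemma norm_bump_le:
  assumes "Re w > 0"
  shows "cmod (bump w) \<le> exp (- Re (1 / w)) * cmod w"
proof -
  have "1 \<le> Re (1 + w)" using assms by simp
  also have "\<dots> \<le> cmod (1 + w)" by (rule complex_Re_le_cmod)
  finally have "1 \<le> cmod ((1 + w)^2)" by (simp add: norm_power)
  then have "cmod (bump w) \<le> cmod (exp (- 1 / w)) * cmod w / 1"
    unfolding bump_def norm_mult norm_divide by (intro divide_left_mono) auto
  then show ?thesis by simp
qed

lemma norm_bump_scaled_le:
  assumes "Re z > 0"
  shows "cmod (bump (z / 2^n)) \<le> exp (- Re (1 / z)) * cmod z / 2^n"
proof -
  have "Re (1 / z) \<le> 2^n * Re (1 / z)"
    using Re_one_over_pos[OF assms] by simp
  also have "\<dots> = Re (1 / (z / 2^n))" by (simp add: Re_divide)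
  finally have "exp (- Re (1 / (z / 2^n))) \<le> exp (- Re (1 / z))" by simp
  moreover have "cmod (bump (z / 2^n)) \<le> exp (- Re (1 / (z / 2^n))) * cmod (z / 2^n)"
    using assms by (intro norm_bump_le) simp
  ultimately have "cmod (bump (z / 2^n)) \<le> exp (- Re (1 / z)) * cmod (z / 2^n)"
    by (meson mult_right_mono norm_ge_zero order_trans)
  then show ?thesis by (simp add: norm_divide norm_power)
qed

lemma holomorphic_on_bump_scaled: "(\<lambda>z. bump (z / 2^n)) holomorphic_on {z. Re z > 0}"
  unfolding bump_def
proof (intro holomorphic_intros)
  fix z :: complex assume "z \<in> {z. Re z > 0}"
  then have "Re z > 0" by simp
  then show "z / 2^n \<noteq> 0" by auto
  have "Re (1 + z / 2^n) > 0" using \<open>Re z > 0\<close> by (simp add: add_pos_nonneg)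
  then have "1 + z / 2^n \<noteq> 0" by force
  then show "(1 + z / 2^n)^2 \<noteq> 0" by simp
qed simp_all

lemma bump_real_nonneg: "s > 0 \<Longrightarrow> 0 \<le> bump_real s"
  unfolding bump_real_def by simp

lemma bump_real_le_self:
  assumes "s > 0"
  shows "bump_real s \<le> s"
proof -
  have "exp (- 1 / s) * s / (1 + s)^2 \<le> 1 * s / 1"
    using assms by (intro frac_le mult_right_mono) auto
  then show ?thesis unfolding bump_real_def by simp
qed

lemma bump_real_le_inverse:
  assumes "s > 0"
  shows "bump_real s \<le> 1 / s"
proof -
  have "s * s \<le> (1 + s)^2" using assms by (simp add: power2_eq_square algebra_simps)
  then have "s / (1 + s)^2 \<le> 1 / s" using assms by (simp add: field_simps)
  then have "exp (- 1 / s) * (s / (1 + s)^2) \<le> 1 * (1 / s)"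
    using assms by (intro mult_mono) auto
  then show ?thesis unfolding bump_real_def by simp
qed

lemma bump_real_lower:
  assumes "1 \<le> s" "s \<le> 2"
  shows "exp (-1) / 9 \<le> bump_real s"
proof -
  have "s * s \<le> 2 * s" using assms by (intro mult_right_mono) auto
  moreover have "(1 + s)^2 = 1 + 2 * s + s * s" by (simp add: power2_eq_square algebra_simps)
  ultimately have "(1 + s)^2 \<le> 9 * s" using assms by linarith
  then have "1 / 9 \<le> s / (1 + s)^2" using assms by (simp add: field_simps)
  moreover have "exp (-1) \<le> exp (- 1 / s)" using assms by (simp add: field_simps)
  ultimately have "exp (-1) * (1/9) \<le> exp (- 1 / s) * (s / (1 + s)^2)"
    by (intro mult_mono) auto
  then show ?thesis unfolding bump_real_def by simp
qed

lemma dyadic_interval: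
  fixes t :: real
  assumes "1 \<le> t"
  obtains k :: nat where "2^k \<le> t" "t < 2^(k+1)"
proof -
  have "nat \<lfloor>t\<rfloor> \<ge> 1" using assms by linarith
  then have "\<exists>k. 2^k \<le> nat \<lfloor>t\<rfloor> \<and> nat \<lfloor>t\<rfloor> < 2^(k+1)" by (intro ex_power_ivl1) auto
  then obtain k where k: "2^k \<le> nat \<lfloor>t\<rfloor>" "nat \<lfloor>t\<rfloor> < 2^(k+1)" by blast
  have "real (2^k) \<le> real (nat \<lfloor>t\<rfloor>)" "real (nat \<lfloor>t\<rfloor>) + 1 \<le> real (2^(k+1))"
    using k by linarith+
  moreover have "real (nat \<lfloor>t\<rfloor>) \<le> t" "t < real (nat \<lfloor>t\<rfloor>) + 1" using assms by linarith+
  ultimately have "real (2^k) \<le> t" "t < real (2^(k+1))" by linarith+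
  then show ?thesis using that[of k] by (simp only: of_nat_power of_nat_numeral)
qed

lemma two_sided_geometric:
  fixes q :: real
  assumes "0 \<le> q" "q < 1"
  shows "summable (\<lambda>j. if j \<le> k then q^(k-j) else q^(j-k-1))"
    "(\<Sum>j. if j \<le> k then q^(k-j) else q^(j-k-1)) \<le> 2 / (1 - q)"
proof -
  define f where "f j = (if j \<le> k then q^(k-j) else q^(j-k-1))" for j
  have shift: "f (n + Suc k) = q^n" for n unfolding f_def by simp
  have geom: "summable (\<lambda>n. q^n)" using assms by simp
  then show sf: "summable (\<lambda>j. if j \<le> k then q^(k-j) else q^(j-k-1))"
    using summable_iff_shift[of f "Suc k"] unfolding f_def shift by simp
  have "(\<Sum>j. f j) = (\<Sum>n. f (n + Suc k)) + (\<Sum>i<Suc k. f i)"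
    using sf unfolding f_def[abs_def] by (rule suminf_split_initial_segment)
  also have "(\<Sum>i<Suc k. f i) = (\<Sum>i<Suc k. q^i)"
    unfolding f_def using sum.nat_diff_reindex[of "\<lambda>i. q^i" "Suc k"] by simp
  also have "\<dots> \<le> (\<Sum>i. q^i)" using geom assms by (intro sum_le_suminf) auto
  finally show "(\<Sum>j. if j \<le> k then q^(k-j) else q^(j-k-1)) \<le> 2 / (1 - q)"
    unfolding f_def shift using assms by (simp add: suminf_geometric)
qed

lemma sqrt_div_le_power:
  assumes "2^m \<le> x"
  shows "sqrt x / x \<le> (1 / sqrt 2)^m"
proof -
  have "x > 0" using assms zero_less_power[of "2::real" m] by linarith
  then have "sqrt x / x = 1 / sqrt x" by (simp add: divide_simps)
  also have "\<dots> \<le> 1 / sqrt (2^m)"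
    using assms \<open>x > 0\<close> by (intro divide_left_mono real_sqrt_le_mono mult_pos_pos) auto
  also have "\<dots> = (1 / sqrt 2)^m" by (simp add: real_sqrt_power power_one_over)
  finally show ?thesis .
qed

section \<open>Dyadic series with summable weights\<close>

definition dyadic_series :: "(nat \<Rightarrow> real) \<Rightarrow> complex \<Rightarrow> complex" where
  "dyadic_series a z = (\<Sum>n. of_real (a n) * bump (z / 2^n))"

definition dyadic_sum :: "(nat \<Rightarrow> real) \<Rightarrow> real \<Rightarrow> real" where
  "dyadic_sum a t = (\<Sum>n. a n * bump_real (t / 2^n))"

definition smoothing_holo :: "(nat \<Rightarrow> real) \<Rightarrow> complex \<Rightarrow> complex" where
  "smoothing_holo a z = 1 - exp (- 1 / z) + dyadic_series a z"

definition smoothing :: "(nat \<Rightarrow> real) \<Rightarrow> real \<Rightarrow> real" where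
  "smoothing a t = Re (smoothing_holo a (of_real t))"

lemma ball_half_radius_bounds:
  fixes w :: complex
  assumes "t > 0" "w \<in> ball (of_real t) (t/2)"
  shows "Re w > t/2" "cmod w < 2 * t" "2 / (9 * t) \<le> Re (1 / w)"
proof -
  have dist: "cmod (w - of_real t) < t/2" using assms(2) by (simp add: dist_norm norm_minus_commute)
  moreover have "\<bar>Re w - t\<bar> \<le> cmod (w - of_real t)" using abs_Re_le_cmod[of "w - of_real t"] by simp
  ultimately show Re: "Re w > t/2" by linarith
  have "cmod w \<le> t + cmod (w - of_real t)"
    using norm_triangle_ineq[of "of_real t" "w - of_real t"] assms(1) by simp
  then have norm: "cmod w < 3 * t / 2" using dist by linarith
  then show "cmod w < 2 * t" using assms(1) by linarith
  have "(t/2) / (3 * t / 2)^2 \<le> Re w / (cmod w)^2"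
  proof (rule frac_le)
    show "0 < (cmod w)^2" using Re assms(1) by (auto simp: complex_eq_iff)
    show "(cmod w)^2 \<le> (3 * t / 2)^2" using norm by (intro power_mono) auto
  qed (use Re assms(1) in auto)
  moreover have "(t/2) / (3 * t / 2)^2 = 2 / (9 * t)" using assms(1) by (simp add: power2_eq_square field_simps)
  ultimately show "2 / (9 * t) \<le> Re (1 / w)" by (simp add: Re_divide cmod_power2)
qed

lemma cball_half_subset_Re_pos:
  assumes "t > 0"
  shows "cball (of_real t) (t/2) \<subseteq> {z. Re z > 0}"
proof
  fix w :: complex assume "w \<in> cball (of_real t) (t/2)"
  then have "\<bar>Re w - t\<bar> \<le> t/2"
    using abs_Re_le_cmod[of "w - of_real t"] by (simp add: dist_norm norm_minus_commute)
  then show "w \<in> {z. Re z > 0}" using assms by (simp, arith)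
qed

locale dyadic_weights =
  fixes a :: "nat \<Rightarrow> real"
  assumes weights_nonneg: "\<And>n. a n \<ge> 0"
    and weights_summable: "summable (\<lambda>n. a n / 2^n)"
begin

lemma weights_sum_nonneg: "(\<Sum>n. a n / 2^n) \<ge> 0"
  using weights_nonneg by (intro suminf_nonneg weights_summable) auto

lemma norm_dyadic_term_le:
  assumes "Re z > 0"
  shows "cmod (of_real (a n) * bump (z / 2^n)) \<le> exp (- Re (1 / z)) * cmod z * (a n / 2^n)"
proof -
  have "cmod (of_real (a n) * bump (z / 2^n)) = a n * cmod (bump (z / 2^n))"
    using weights_nonneg[of n] by (simp add: norm_mult)
  also have "\<dots> \<le> a n * (exp (- Re (1 / z)) * cmod z / 2^n)"
    using norm_bump_scaled_le[OF assms] weights_nonneg[of n] by (rule mult_left_mono)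
  finally show ?thesis by (simp add: mult_ac)
qed

lemma summable_norm_dyadic_series:
  "Re z > 0 \<Longrightarrow> summable (\<lambda>n. cmod (of_real (a n) * bump (z / 2^n)))"
  using norm_dyadic_term_le
  by (intro summable_comparison_test'[OF summable_mult[OF weights_summable, of "exp (- Re (1 / z)) * cmod z"]])
    auto

lemma dyadic_series_sums:
  "Re z > 0 \<Longrightarrow> (\<lambda>n. of_real (a n) * bump (z / 2^n)) sums dyadic_series a z"
  unfolding dyadic_series_def by (rule summable_sums[OF summable_norm_cancel[OF summable_norm_dyadic_series]])

lemma norm_dyadic_series_le:
  assumes "Re z > 0"
  shows "cmod (dyadic_series a z) \<le> exp (- Re (1 / z)) * cmod z * (\<Sum>n. a n / 2^n)"
proof -
  have "cmod (dyadic_series a z) \<le> (\<Sum>n. cmod (of_real (a n) * bump (z / 2^n)))"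
    unfolding dyadic_series_def using summable_norm_dyadic_series[OF assms] by (rule summable_norm)
  also have "\<dots> \<le> (\<Sum>n. exp (- Re (1 / z)) * cmod z * (a n / 2^n))"
    using summable_norm_dyadic_series[OF assms] summable_mult[OF weights_summable]
    by (intro suminf_le norm_dyadic_term_le assms)
  also have "\<dots> = exp (- Re (1 / z)) * cmod z * (\<Sum>n. a n / 2^n)"
    by (rule suminf_mult[OF weights_summable])
  finally show ?thesis .
qed

lemma norm_dyadic_term_le_uniform:
  assumes "Re y > 0" "dist y x < 1"
  shows "cmod (of_real (a n) * bump (y / 2^n)) \<le> (cmod x + 1) * (a n / 2^n)"
proof -
  have "exp (- Re (1 / y)) * cmod y \<le> 1 * cmod y"
    using Re_one_over_pos[OF assms(1)] by (intro mult_right_mono) auto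
  also have "\<dots> \<le> cmod x + 1"
    using assms(2) norm_triangle_ineq2[of y x] by (simp add: dist_norm)
  finally have "exp (- Re (1 / y)) * cmod y * (a n / 2^n) \<le> (cmod x + 1) * (a n / 2^n)"
    using weights_nonneg[of n] by (intro mult_right_mono) auto
  with norm_dyadic_term_le[OF assms(1)] show ?thesis by (rule order_trans)
qed

lemma holomorphic_dyadic_series: "dyadic_series a holomorphic_on {z. Re z > 0}"
proof -
  let ?H = "{z. Re z > 0}"
  define f where "f n z = of_real (a n) * bump (z / 2^n)" for n z
  have "open ?H" by (simp add: open_halfspace_Re_gt)
  have "\<exists>g g'. \<forall>z\<in>?H. ((\<lambda>n. f n z) sums g z) \<and> ((\<lambda>n. deriv (f n) z) sums g' z) \<and>
                      (g has_field_derivative g' z) (at z)"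
  proof (rule series_and_derivative_comparison_complex[OF \<open>open ?H\<close>])
    fix n z assume "z \<in> ?H"
    moreover have "f n holomorphic_on ?H"
      unfolding f_def by (intro holomorphic_intros holomorphic_on_bump_scaled)
    ultimately show "(f n has_field_derivative deriv (f n) z) (at z)"
      using \<open>open ?H\<close> by (intro holomorphic_derivI)
  next
    fix x assume "x \<in> ?H"
    define h :: "nat \<Rightarrow> complex" where "h n = of_real ((cmod x + 1) * (a n / 2^n))" for n
    have "cmod (h n) = (cmod x + 1) * (a n / 2^n)" for n
      unfolding h_def norm_of_real using weights_nonneg[of n] by simp
    then have "cmod (f n y) \<le> cmod (h n)" if "y \<in> ball x 1 \<inter> ?H" for n y
      using norm_dyadic_term_le_uniform[of y x n] that unfolding f_def by (simp add: dist_commute)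
    then have "\<forall>\<^sub>F n in sequentially. \<forall>y\<in>ball x 1 \<inter> ?H. cmod (f n y) \<le> cmod (h n)"
      by (intro always_eventually allI ballI)
    moreover have "summable h"
      unfolding h_def summable_complex_of_real by (intro summable_mult weights_summable)
    moreover have "range h \<subseteq> \<real>\<^sub>\<ge>\<^sub>0" unfolding h_def using weights_nonneg by auto
    ultimately show "\<exists>d h. 0 < d \<and> summable h \<and> range h \<subseteq> \<real>\<^sub>\<ge>\<^sub>0 \<and>
                 (\<forall>\<^sub>F n in sequentially. \<forall>y\<in>ball x d \<inter> ?H. cmod (f n y) \<le> cmod (h n))"
      using zero_less_one by blast
  qed
  then obtain g g' where g: "\<And>z. z \<in> ?H \<Longrightarrow> (\<lambda>n. f n z) sums g z"
    and g': "\<And>z. z \<in> ?H \<Longrightarrow> (g has_field_derivative g' z) (at z)"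
    by blast
  have "g holomorphic_on ?H"
    unfolding holomorphic_on_def field_differentiable_def
    using g' by (blast intro: has_field_derivative_at_within)
  moreover have "g z = dyadic_series a z" if "z \<in> ?H" for z
    using sums_unique2[OF g[OF that, unfolded f_def] dyadic_series_sums] that by simp
  ultimately show ?thesis by (rule holomorphic_transform)
qed

lemma dyadic_sum_term_bounds:
  assumes "t > 0"
  shows "0 \<le> a n * bump_real (t / 2^n)" "a n * bump_real (t / 2^n) \<le> t * (a n / 2^n)"
proof -
  show "0 \<le> a n * bump_real (t / 2^n)"
    using weights_nonneg[of n] bump_real_nonneg[of "t / 2^n"] assms by simp
  have "a n * bump_real (t / 2^n) \<le> a n * (t / 2^n)"
    using weights_nonneg[of n] bump_real_le_self[of "t / 2^n"] assms by (intro mult_left_mono) auto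
  then show "a n * bump_real (t / 2^n) \<le> t * (a n / 2^n)" by (simp add: mult.commute)
qed

lemma summable_dyadic_sum: "t > 0 \<Longrightarrow> summable (\<lambda>n. a n * bump_real (t / 2^n))"
  by (rule summable_comparison_test'[OF summable_mult[OF weights_summable, of t]])
    (use dyadic_sum_term_bounds in auto)

lemma dyadic_sum_bounds:
  assumes "t > 0"
  shows "0 \<le> dyadic_sum a t" "dyadic_sum a t \<le> t * (\<Sum>n. a n / 2^n)"
proof -
  show "0 \<le> dyadic_sum a t"
    unfolding dyadic_sum_def using summable_dyadic_sum assms dyadic_sum_term_bounds
    by (intro suminf_nonneg) auto
  have "dyadic_sum a t \<le> (\<Sum>n. t * (a n / 2^n))"
    unfolding dyadic_sum_def using summable_dyadic_sum assms dyadic_sum_term_bounds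
    by (intro suminf_le summable_mult weights_summable) auto
  also have "\<dots> = t * (\<Sum>n. a n / 2^n)" by (rule suminf_mult[OF weights_summable])
  finally show "dyadic_sum a t \<le> t * (\<Sum>n. a n / 2^n)" .
qed

lemma dyadic_series_of_real:
  assumes "t > 0"
  shows "dyadic_series a (of_real t) = of_real (dyadic_sum a t)"
proof -
  have "(\<lambda>n. of_real (a n * bump_real (t / 2^n))) sums (of_real (dyadic_sum a t) :: complex)"
    unfolding dyadic_sum_def sums_of_real_iff using summable_dyadic_sum[OF assms] by (rule summable_sums)
  moreover have "(\<lambda>n. of_real (a n * bump_real (t / 2^n))) sums dyadic_series a (of_real t)"
    using dyadic_series_sums[of "of_real t"] assms by (simp flip: bump_of_real)
  ultimately show ?thesis by (simp add: sums_unique2)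
qed

lemma smoothing_eq:
  assumes "t > 0"
  shows "smoothing a t = 1 - exp (- 1 / t) + dyadic_sum a t"
proof -
  have "exp (- 1 / of_real t) = (of_real (exp (- 1 / t)) :: complex)" by (simp flip: exp_of_real)
  then show ?thesis
    unfolding smoothing_def smoothing_holo_def using dyadic_series_of_real[OF assms] by simp
qed

lemma smoothing_pos:
  assumes "t > 0"
  shows "smoothing a t > 0"
proof -
  have "exp (- 1 / t) < 1" using assms by simp
  then show ?thesis using smoothing_eq[OF assms] dyadic_sum_bounds(1)[OF assms] by linarith
qed

lemma smoothing_bounds_unit_interval:
  assumes "0 < t" "t \<le> 1"
  shows "1/2 \<le> smoothing a t" "smoothing a t \<le> 1 + (\<Sum>n. a n / 2^n)"
proof -
  have "exp (- 1 / t) \<le> exp (- 1)" using assms by (simp add: field_simps)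
  also have "exp (- 1 :: real) \<le> 1/2"
    using exp_ge_add_one_self[of 1] by (simp add: exp_minus field_simps)
  finally show "1/2 \<le> smoothing a t"
    using smoothing_eq[of t] dyadic_sum_bounds(1)[of t] assms by simp
  have "t * (\<Sum>n. a n / 2^n) \<le> (\<Sum>n. a n / 2^n)"
    using assms weights_sum_nonneg by (intro mult_left_le_one_le) auto
  then show "smoothing a t \<le> 1 + (\<Sum>n. a n / 2^n)"
    using smoothing_eq[of t] dyadic_sum_bounds(2)[of t] assms exp_gt_zero[of "- 1 / t"] by linarith
qed

lemma smoothing_tendsto: "(smoothing a \<longlongrightarrow> 1) (at_right 0)"
proof (rule LIM_zero_cancel, rule Lim_null_comparison)
  define S where "S = (\<Sum>n. a n / 2^n)"
  have "norm (smoothing a t - 1) \<le> exp (- 1 / t) + t * S" if "t > 0" for t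
    unfolding real_norm_def abs_le_iff S_def
    using smoothing_eq[OF that] dyadic_sum_bounds[OF that] exp_gt_zero[of "- 1 / t"] by linarith
  then show "eventually (\<lambda>t. norm (smoothing a t - 1) \<le> exp (- 1 / t) + t * S) (at_right 0)"
    by (auto simp: eventually_at_right_field intro!: exI[of _ 1])
  show "((\<lambda>t. exp (- 1 / t) + t * S) \<longlongrightarrow> 0) (at_right 0)" by real_asymp
qed

lemma holomorphic_smoothing_holo: "smoothing_holo a holomorphic_on {z. Re z > 0}"
  unfolding smoothing_holo_def[abs_def]
  by (intro holomorphic_intros holomorphic_dyadic_series) auto

lemma smooth_on_smoothing: "smooth_on {0<..} (smoothing a)"
proof -
  have "smooth_on {0<..} (\<lambda>t. Re (smoothing_holo a (of_real t)))"
    by (rule smooth_on_Re_holomorphic[OF holomorphic_smoothing_holo]) (auto simp: open_halfspace_Re_gt)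
  then show ?thesis by (simp add: smoothing_def[abs_def])
qed

lemma norm_smoothing_holo_minus_one_le:
  fixes w :: complex
  assumes "t > 0" "w \<in> ball (of_real t) (t/2)"
  shows "cmod (smoothing_holo a w - 1) \<le> exp (- 2 / (9 * t)) * (1 + 2 * t * (\<Sum>n. a n / 2^n))"
proof -
  define E where "E = exp (- Re (1 / w))"
  have Re: "Re w > 0" using ball_half_radius_bounds[OF assms] assms(1) by linarith
  have E: "E \<le> exp (- 2 / (9 * t))" using ball_half_radius_bounds(3)[OF assms] by (simp add: E_def)
  note S = weights_sum_nonneg
  have "cmod (dyadic_series a w) \<le> E * cmod w * (\<Sum>n. a n / 2^n)"
    using norm_dyadic_series_le[OF Re] by (simp add: E_def)
  also have "\<dots> \<le> E * (2 * t) * (\<Sum>n. a n / 2^n)"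
    using ball_half_radius_bounds(2)[OF assms] S by (intro mult_right_mono mult_left_mono) (auto simp: E_def)
  finally have "cmod (dyadic_series a w) \<le> E * (2 * t) * (\<Sum>n. a n / 2^n)" .
  moreover have "smoothing_holo a w - 1 = dyadic_series a w - exp (- 1 / w)"
    by (simp add: smoothing_holo_def)
  moreover have "cmod (exp (- 1 / w)) = E" by (simp add: E_def)
  ultimately have "cmod (smoothing_holo a w - 1) \<le> E + E * (2 * t) * (\<Sum>n. a n / 2^n)"
    using norm_triangle_ineq4[of "dyadic_series a w" "exp (- 1 / w)"] by simp
  also have "\<dots> = E * (1 + 2 * t * (\<Sum>n. a n / 2^n))" by (simp add: algebra_simps)
  also have "\<dots> \<le> exp (- 2 / (9 * t)) * (1 + 2 * t * (\<Sum>n. a n / 2^n))"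
    using E S assms(1) by (intro mult_right_mono) auto
  finally show ?thesis .
qed

lemma norm_higher_deriv_smoothing_le:
  assumes "n \<ge> 1" "0 < t" "t < 1"
  shows "\<bar>(deriv ^^ n) (smoothing a) t\<bar> \<le> fact n * (2 * (1 + 2 * (\<Sum>j. a j / 2^j)) * exp (- 2 / (9 * t))) / (t/2)^n"
proof -
  define S where "S = (\<Sum>j. a j / 2^j)"
  have "(deriv ^^ n) (smoothing a) t = Re ((deriv ^^ n) (smoothing_holo a) (of_real t))"
    unfolding smoothing_def[abs_def] using assms
    by (intro higher_deriv_Re_holomorphic[where S="{0<..}", OF holomorphic_smoothing_holo])
      (auto simp: open_halfspace_Re_gt)
  also have "\<bar>\<dots>\<bar> \<le> cmod ((deriv ^^ n) (smoothing_holo a) (of_real t))" by (rule abs_Re_le_cmod)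
  also have "\<dots> \<le> fact n * (2 * (1 + 2 * S) * exp (- 2 / (9 * t))) / (t/2)^n"
  proof (rule Cauchy_higher_deriv_bound)
    show "smoothing_holo a holomorphic_on ball (of_real t) (t/2)"
      by (rule holomorphic_on_subset[OF holomorphic_smoothing_holo])
        (use cball_half_subset_Re_pos[OF assms(2)] ball_subset_cball in blast)
    show "continuous_on (cball (of_real t) (t/2)) (smoothing_holo a)"
      using holomorphic_on_imp_continuous_on[OF holomorphic_smoothing_holo] cball_half_subset_Re_pos[OF assms(2)]
      by (rule continuous_on_subset)
    fix w :: complex assume "w \<in> ball (of_real t) (t/2)"
    then have "cmod (smoothing_holo a w - 1) \<le> exp (- 2 / (9 * t)) * (1 + 2 * t * S)"
      unfolding S_def by (rule norm_smoothing_holo_minus_one_le[OF assms(2)])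
    also have "\<dots> \<le> exp (- 2 / (9 * t)) * (1 + 2 * S)"
      using weights_sum_nonneg assms unfolding S_def
      by (intro mult_left_mono add_left_mono) (auto intro: mult_left_le_one_le)
    also have "\<dots> < 2 * (1 + 2 * S) * exp (- 2 / (9 * t))"
      using weights_sum_nonneg unfolding S_def by simp
    finally show "smoothing_holo a w \<in> ball 1 (2 * (1 + 2 * S) * exp (- 2 / (9 * t)))"
      by (simp add: dist_norm norm_minus_commute)
  qed (use assms in auto)
  finally show ?thesis unfolding S_def .
qed

lemma higher_deriv_smoothing_tendsto_zero:
  assumes "n \<ge> 1"
  shows "((deriv ^^ n) (smoothing a) \<longlongrightarrow> 0) (at_right 0)"
proof (rule Lim_null_comparison)
  define M where "M = 2 * (1 + 2 * (\<Sum>j. a j / 2^j))"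
  show "eventually (\<lambda>t. norm ((deriv ^^ n) (smoothing a) t) \<le> fact n * (M * exp (- 2 / (9 * t))) / (t/2)^n)
          (at_right 0)"
    using norm_higher_deriv_smoothing_le[OF assms] unfolding M_def eventually_at_right_field
    by (intro exI[of _ 1]) auto
  show "((\<lambda>t. fact n * (M * exp (- 2 / (9 * t))) / (t/2)^n) \<longlongrightarrow> 0) (at_right 0)" by real_asymp
qed

end

section \<open>Weights sampled from a function with Potter bounds\<close>

locale Potter_half =
  fixes K :: real and b :: "real \<Rightarrow> real"
  assumes Potter: "Potter_bounds (1/2) K b"
    and pos: "\<And>t. t > 0 \<Longrightarrow> b t > 0"
begin

lemma K_ge_one: "K \<ge> 1"
  using Potter_bounds_ge_one[OF Potter] pos by simp

lemmas Potter_sqrt = Potter_bounds_half_sqrt[OF Potter]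

lemma dyadic_samples_le: "b (2^n) / 2^n \<le> K * b 1 * (1 / sqrt 2)^n"
proof -
  have "b (2^n) / 2^n \<le> K * sqrt (2^n) * b 1 / 2^n"
    using Potter_sqrt(2)[of 1 "2^n"] by (intro divide_right_mono) simp_all
  also have "\<dots> = K * b 1 * (sqrt (2^n) / 2^n)" by simp
  also have "\<dots> \<le> K * b 1 * (1 / sqrt 2)^n"
    using K_ge_one pos[of 1] by (intro mult_left_mono sqrt_div_le_power) auto
  finally show ?thesis .
qed

sublocale dyadic_weights "\<lambda>n. b (2^n)"
proof
  show "b (2^n) \<ge> 0" for n using pos[of "2^n"] by simp
  have "summable (\<lambda>n. K * b 1 * (1 / sqrt 2 :: real)^n)"
    by (intro summable_mult summable_geometric) simp
  moreover have "norm (b (2^n) / 2^n) \<le> K * b 1 * (1 / sqrt 2)^n" for n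
    using dyadic_samples_le[of n] pos[of "2^n"] by simp
  ultimately show "summable (\<lambda>n. b (2^n) / 2^n)"
    by (rule summable_comparison_test')
qed

lemma dyadic_term_le:
  assumes k: "2^k \<le> t" "t < 2^(k+1)"
  shows "b (2^j) * bump_real (t / 2^j)
           \<le> K * b t * (if j \<le> k then (1 / sqrt 2)^(k-j) else (1 / sqrt 2)^(j-k-1))"
proof -
  have t: "t > 0" using k(1) zero_less_power[of "2::real" k] by linarith
  have Kb: "K * b t \<ge> 0" using K_ge_one pos[OF t] by simp
  show ?thesis
  proof (cases "j \<le> k")
    case True
    define x where "x = t / 2^j"
    have "(2::real)^j \<le> 2^k" using True by (intro power_increasing) auto
    then have tj: "2^j \<le> t" using k(1) by linarith
    have x: "2^(k-j) \<le> x" unfolding x_def using k(1) True by (simp add: power_diff le_divide_eq mult.commute)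
    have "b (2^j) * bump_real x \<le> (K * sqrt x * b t) * (1 / x)"
      unfolding x_def using Potter_sqrt(1)[OF _ tj] bump_real_le_inverse[of "t / 2^j"]
        bump_real_nonneg[of "t / 2^j"] t pos[OF t] K_ge_one
      by (intro mult_mono) auto
    also have "\<dots> = K * b t * (sqrt x / x)" by simp
    also have "\<dots> \<le> K * b t * (1 / sqrt 2)^(k-j)"
      using sqrt_div_le_power[OF x] Kb by (rule mult_left_mono)
    finally show ?thesis using True by (simp add: x_def)
  next
    case False
    define x where "x = 2^j / t"
    have "(2::real)^(k+1) \<le> 2^j" using False by (intro power_increasing) auto
    then have tj: "t \<le> 2^j" using k(2) by linarith
    have "(2::real)^(j-k-1) = 2^j / 2^(k+1)" using False by (simp add: power_diff)
    also have "\<dots> \<le> x" unfolding x_def using k(2) t by (intro divide_left_mono) auto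
    finally have x: "2^(j-k-1) \<le> x" .
    have "b (2^j) * bump_real (t / 2^j) \<le> (K * sqrt x * b t) * (1 / x)"
      unfolding x_def using Potter_sqrt(2)[OF t tj] bump_real_le_self[of "t / 2^j"]
        bump_real_nonneg[of "t / 2^j"] t pos[OF t] K_ge_one
      by (intro mult_mono) auto
    also have "\<dots> = K * b t * (sqrt x / x)" by simp
    also have "\<dots> \<le> K * b t * (1 / sqrt 2)^(j-k-1)"
      using sqrt_div_le_power[OF x] Kb by (rule mult_left_mono)
    finally show ?thesis using False by simp
  qed
qed

lemma dyadic_sum_upper:
  assumes "1 \<le> t"
  shows "dyadic_sum (\<lambda>n. b (2^n)) t \<le> K * b t * (2 / (1 - 1 / sqrt 2))"
proof -
  obtain k where k: "2^k \<le> t" "t < 2^(k+1)" using dyadic_interval[OF assms] .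
  define q :: real where "q = 1 / sqrt 2"
  have q: "0 \<le> q" "q < 1" by (auto simp: q_def)
  define d where "d j = (if j \<le> k then q^(k-j) else q^(j-k-1))" for j
  have sd: "summable d" unfolding d_def using two_sided_geometric(1)[OF q] .
  have "b (2^j) * bump_real (t / 2^j) \<le> K * b t * d j" for j
    unfolding d_def q_def by (rule dyadic_term_le[OF k])
  then have "dyadic_sum (\<lambda>n. b (2^n)) t \<le> (\<Sum>j. K * b t * d j)"
    unfolding dyadic_sum_def using summable_dyadic_sum[of t] assms summable_mult[OF sd]
    by (intro suminf_le) auto
  also have "\<dots> = K * b t * (\<Sum>j. d j)" by (rule suminf_mult[OF sd])
  also have "\<dots> \<le> K * b t * (2 / (1 - q))"
    using two_sided_geometric(2)[OF q, of k] K_ge_one pos[of t] assms unfolding d_def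
    by (intro mult_left_mono) auto
  finally show ?thesis by (simp add: q_def)
qed

lemma dyadic_sum_lower:
  assumes "1 \<le> t"
  shows "b t \<le> 18 * exp 1 * K * dyadic_sum (\<lambda>n. b (2^n)) t"
proof -
  obtain k where k: "2^k \<le> t" "t < 2^(k+1)" using dyadic_interval[OF assms] .
  have t: "t > 0" using assms by simp
  have s: "1 \<le> t / 2^k" "t / 2^k \<le> 2" using k by (simp_all add: le_divide_eq divide_le_eq mult.commute)
  have "sqrt (t / 2^k) \<le> sqrt (2^2)" using s by (intro real_sqrt_le_mono) auto
  then have "sqrt (t / 2^k) \<le> 2" by simp
  have "b t \<le> K * sqrt (t / 2^k) * b (2^k)" using Potter_sqrt(2)[of "2^k" t] k by simp
  also have "\<dots> \<le> K * 2 * b (2^k)"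
    using \<open>sqrt (t / 2^k) \<le> 2\<close> K_ge_one pos[of "2^k"] by (intro mult_right_mono mult_left_mono) auto
  also have "\<dots> = 18 * exp 1 * K * (b (2^k) * (exp (-1) / 9))" by (simp add: exp_minus field_simps)
  also have "b (2^k) * (exp (-1) / 9) \<le> b (2^k) * bump_real (t / 2^k)"
    using bump_real_lower[OF s] pos[of "2^k"] by (intro mult_left_mono) auto
  also have "\<dots> \<le> dyadic_sum (\<lambda>n. b (2^n)) t"
    unfolding dyadic_sum_def
    using sum_le_suminf[OF summable_dyadic_sum[OF t], of "{k}"] dyadic_sum_term_bounds(1)[OF t] by simp
  finally show ?thesis using K_ge_one by (simp add: mult_left_mono)
qed

lemma smoothing_upper:
  assumes "1 \<le> t"
  shows "smoothing (\<lambda>n. b (2^n)) t \<le> K * (1 / b 1 + 2 / (1 - 1 / sqrt 2)) * b t"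
proof -
  have "1 - exp (- 1 / t) \<le> 1 / t" using exp_ge_add_one_self[of "- 1 / t"] by simp
  also have "\<dots> \<le> 1 / sqrt t"
  proof -
    have "t \<le> t * t" using mult_right_mono[of 1 t t] assms by simp
    then have "sqrt t \<le> t" using real_sqrt_le_mono[of t "t * t"] assms by simp
    then show ?thesis using assms by (intro divide_left_mono) auto
  qed
  also have "\<dots> \<le> K * b t / b 1"
    using Potter_sqrt(1)[of 1 t] assms pos[of 1] by (simp add: field_simps)
  finally show ?thesis
    using smoothing_eq[of t] dyadic_sum_upper[OF assms] assms by (simp add: algebra_simps)
qed

lemma equiv_on_smoothing_ge_one: "equiv_on {1..} (smoothing (\<lambda>n. b (2^n))) b"
proof (rule equiv_onI)
  define C where "C = max (18 * exp 1 * K) (K * (1 / b 1 + 2 / (1 - 1 / sqrt 2)))"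
  have "1 * 1 \<le> exp 1 * K" using K_ge_one by (intro mult_mono) auto
  then show "C \<ge> 1" unfolding C_def by linarith
  fix t :: real assume "t \<in> {1..}"
  then have t: "1 \<le> t" by simp
  have "b t \<le> 18 * exp 1 * K * dyadic_sum (\<lambda>n. b (2^n)) t" by (rule dyadic_sum_lower[OF t])
  also have "\<dots> \<le> 18 * exp 1 * K * smoothing (\<lambda>n. b (2^n)) t"
    using smoothing_eq[of t] t K_ge_one by (intro mult_left_mono) auto
  also have "\<dots> \<le> C * smoothing (\<lambda>n. b (2^n)) t"
    using smoothing_pos[of t] t by (intro mult_right_mono) (auto simp: C_def)
  finally show "b t \<le> C * smoothing (\<lambda>n. b (2^n)) t" .
  have "smoothing (\<lambda>n. b (2^n)) t \<le> K * (1 / b 1 + 2 / (1 - 1 / sqrt 2)) * b t"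
    by (rule smoothing_upper[OF t])
  also have "\<dots> \<le> C * b t" using pos[of t] t by (intro mult_right_mono) (auto simp: C_def)
  finally show "smoothing (\<lambda>n. b (2^n)) t \<le> C * b t" .
qed

lemma equiv_on_smoothing:
  assumes "L > 0" "(b \<longlongrightarrow> L) (at_right 0)"
  shows "equiv_on {0<..} (smoothing (\<lambda>n. b (2^n))) b"
proof -
  obtain m M where mM: "m > 0" "M > 0" "\<And>t. 0 < t \<Longrightarrow> t \<le> 1 \<Longrightarrow> m \<le> b t \<and> b t \<le> M"
    by (rule Potter_bounds_bounded_near_zero[OF Potter _ pos assms]) auto
  have "equiv_on {0<..1} (smoothing (\<lambda>n. b (2^n))) b"
    using smoothing_bounds_unit_interval mM by (intro equiv_on_if_bounded[of "1/2" m]) auto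
  then have "equiv_on ({0<..1} \<union> {1..}) (smoothing (\<lambda>n. b (2^n))) b"
    using equiv_on_smoothing_ge_one by (intro equiv_on_Un) (auto intro!: less_imp_le pos)
  moreover have "{0<..1} \<union> {1..} = {0::real<..}" by auto
  ultimately show ?thesis by simp
qed

end

theorem lemma3p3:
  fixes b :: "real \<Rightarrow> real"
  assumes "slowly_varying b"
    and "\<exists>L>0. (b \<longlongrightarrow> L) (at_right 0)"
  shows "(\<exists>c :: real \<Rightarrow> real. (\<forall>t>0. c t > 0) \<and> equiv_on {0<..} c b \<and> smooth_on {0<..} c \<and>
           (\<exists>L>0. (c \<longlongrightarrow> L) (at_right 0))) \<and>
         ((\<exists>\<delta>>0. \<exists>k. \<forall>t\<in>{0<..<\<delta>}. b t = k) \<longrightarrow>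
         (
         \<exists>c :: real \<Rightarrow> real. (\<forall>t>0. c t > 0) \<and> equiv_on {0<..} c b \<and> smooth_on {0<..} c \<and>
           (\<exists>L>0. (c \<longlongrightarrow> L) (at_right 0)) \<and>
           (\<forall>n\<ge>1. ((deriv ^^ n) c \<longlongrightarrow> 0) (at_right 0))))"
proof -
  obtain K where "Potter_bounds (1/2) K b"
    using slowly_varying_Potter_bounds[OF assms(1), of "1/2"] by auto
  moreover have "\<And>t. t > 0 \<Longrightarrow> b t > 0" using assms(1) by (simp add: slowly_varying_def)
  ultimately interpret Potter_half K b by unfold_locales
  obtain L where L: "L > 0" "(b \<longlongrightarrow> L) (at_right 0)" using assms(2) by blast
  define c where "c = smoothing (\<lambda>n. b (2^n))"
  have "(\<forall>t>0. c t > 0) \<and> equiv_on {0<..} c b \<and> smooth_on {0<..} c \<and> (\<exists>L>0. (c \<longlongrightarrow> L) (at_right 0))"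
    using smoothing_pos equiv_on_smoothing[OF L] smooth_on_smoothing smoothing_tendsto zero_less_one
    unfolding c_def by blast
  moreover have "\<forall>n\<ge>1. ((deriv ^^ n) c \<longlongrightarrow> 0) (at_right 0)"
    using higher_deriv_smoothing_tendsto_zero unfolding c_def by blast
  ultimately show ?thesis by blast
qed

end
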